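(* Let $H(s)=\sum_{a=1}^M H_a(s)$, $0\le s\le1$, be a differentiable family of stoquastic frustration-free Hamiltonians on $\mathcal{Q}^n$ with $J=\max_s\|dH(s)/ds\|$. Let $T$ be a positive integer and $H^{(j)}=H(j/T)$ for $j=0,\ldots,T$. Assume each $H^{(j)}$ has a unique ground-state $|\psi^{(j)}\rangle$, with $H^{(j)}|\psi^{(j)}\rangle=0$, chosen to be a non-negative state, and let $\Delta$ be the smallest, over $j=0,\ldots,T$, of the spectral gap of $H^{(j)}$ (the difference between its smallest and second smallest eigenvalues). Then for every $j=0,\ldots,T-1$, $$\langle\psi^{(j+1)}|\psi^{(j)}\rangle\ge 1-\frac{J^2}{T^2\Delta^2}.$$
   Context: $\mathcal{Q}^n=(\mathbb{C}^2)^{\otimes n}$ with standard basis $\{|x\rangle\}$. A local Hamiltonian $H=\sum_a H_a$ (each term acting on $O(1)$ qubits) is stoquastic if each term has real non-positive off-diagonal entries in the standard basis, and frustration-free if each term is positive semidefinite and the ground-state of $H$ is a zero eigenvector of every term. A non-negative state is a normalized vector with real non-negative amplitudes in the standard basis. *)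

theory Defs
  imports "HOL-Analysis.Analysis"
begin

text \<open>The n-qubit space (C^2)^{\<otimes> n} is modelled by vectors \<open>nat \<Rightarrow> complex\<close> of which
only the entries with index \<open>x < 2^n\<close> matter; the basis state \<open>|x\<rangle>\<close> corresponds to the
bit string whose i-th bit (i < n) is \<open>bit x i\<close>.  Operators are \<open>nat \<Rightarrow> nat \<Rightarrow> complex\<close>
(matrix entries in the standard basis), again only entries below \<open>2^n\<close> matter.\<close>

type_synonym cvec = "nat \<Rightarrow> complex"
type_synonym cmat = "nat \<Rightarrow> nat \<Rightarrow> complex"

definition mat_vec :: "nat \<Rightarrow> cmat \<Rightarrow> cvec \<Rightarrow> cvec" where
  "mat_vec n A v = (\<lambda>x. \<Sum>y<2^n. A x y * v y)"

definition inner_q :: "nat \<Rightarrow> cvec \<Rightarrow> cvec \<Rightarrow> complex" where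
  "inner_q n u v = (\<Sum>x<2^n. cnj (u x) * v x)"

definition vnorm :: "nat \<Rightarrow> cvec \<Rightarrow> real" where
  "vnorm n v = sqrt (\<Sum>x<(2::nat)^n. (cmod (v x))\<^sup>2)"

definition opnorm :: "nat \<Rightarrow> cmat \<Rightarrow> real" where
  "opnorm n A = (SUP v \<in> {v. vnorm n v = 1}. vnorm n (mat_vec n A v))"

definition nonzero_vec :: "nat \<Rightarrow> cvec \<Rightarrow> bool" where
  "nonzero_vec n v \<longleftrightarrow> (\<exists>x<2^n. v x \<noteq> 0)"

definition hermitian :: "nat \<Rightarrow> cmat \<Rightarrow> bool" where
  "hermitian n A \<longleftrightarrow> (\<forall>x<2^n. \<forall>y<2^n. A x y = cnj (A y x))"

definition psd :: "nat \<Rightarrow> cmat \<Rightarrow> bool" where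
  "psd n A \<longleftrightarrow> hermitian n A \<and>
     (\<forall>v. inner_q n v (mat_vec n A v) \<in> \<real> \<and> Re (inner_q n v (mat_vec n A v)) \<ge> 0)"

definition stoquastic_term :: "nat \<Rightarrow> cmat \<Rightarrow> bool" where
  "stoquastic_term n A \<longleftrightarrow> (\<forall>x<2^n. \<forall>y<2^n. x \<noteq> y \<longrightarrow> A x y \<in> \<real> \<and> Re (A x y) \<le> 0)"

text \<open>\<open>A\<close> acts only on the qubits in \<open>S\<close>, i.e. \<open>A = h_S \<otimes> I\<close>.\<close>
definition acts_on :: "nat \<Rightarrow> nat set \<Rightarrow> cmat \<Rightarrow> bool" where
  "acts_on n S A \<longleftrightarrow>
     (\<forall>x<2^n. \<forall>y<2^n. (\<exists>i<n. i \<notin> S \<and> bit x i \<noteq> bit y i) \<longrightarrow> A x y = 0) \<and>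
     (\<forall>x<2^n. \<forall>y<2^n. \<forall>x'<2^n. \<forall>y'<2^n.
        (\<forall>i<n. i \<notin> S \<longrightarrow> bit x i = bit y i \<and> bit x' i = bit y' i) \<and>
        (\<forall>i\<in>S. bit x i = bit x' i \<and> bit y i = bit y' i) \<longrightarrow> A x y = A x' y')"

text \<open>Eigenvalues (real, as the operators considered are Hermitian).\<close>
definition eigenvalues :: "nat \<Rightarrow> cmat \<Rightarrow> real set" where
  "eigenvalues n A = {\<mu>. \<exists>v. nonzero_vec n v \<and> (\<forall>x<2^n. mat_vec n A v x = of_real \<mu> * v x)}"

definition ground_energy :: "nat \<Rightarrow> cmat \<Rightarrow> real" where
  "ground_energy n A = Min (eigenvalues n A)"

definition spectral_gap :: "nat \<Rightarrow> cmat \<Rightarrow> real" where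
  "spectral_gap n A = Min (eigenvalues n A - {ground_energy n A}) - ground_energy n A"

definition is_ground_state :: "nat \<Rightarrow> cmat \<Rightarrow> cvec \<Rightarrow> bool" where
  "is_ground_state n A v \<longleftrightarrow> nonzero_vec n v \<and>
     (\<forall>x<2^n. mat_vec n A v x = of_real (ground_energy n A) * v x)"

definition unique_ground_state :: "nat \<Rightarrow> cmat \<Rightarrow> cvec \<Rightarrow> bool" where
  "unique_ground_state n A \<psi> \<longleftrightarrow> is_ground_state n A \<psi> \<and>
     (\<forall>v. is_ground_state n A v \<longrightarrow> (\<exists>c. \<forall>x<2^n. v x = c * \<psi> x))"

definition nonneg_state :: "nat \<Rightarrow> cvec \<Rightarrow> bool" where
  "nonneg_state n \<psi> \<longleftrightarrow> vnorm n \<psi> = 1 \<and> (\<forall>x<2^n. \<psi> x \<in> \<real> \<and> Re (\<psi> x) \<ge> 0)"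

definition ham_sum :: "nat \<Rightarrow> (nat \<Rightarrow> cmat) \<Rightarrow> cmat" where
  "ham_sum M h = (\<lambda>x y. \<Sum>a<M. h a x y)"

definition stoquastic_ham :: "nat \<Rightarrow> nat \<Rightarrow> (nat \<Rightarrow> cmat) \<Rightarrow> bool" where
  "stoquastic_ham n M h \<longleftrightarrow> (\<forall>a<M. stoquastic_term n (h a))"

definition frustration_free :: "nat \<Rightarrow> nat \<Rightarrow> (nat \<Rightarrow> cmat) \<Rightarrow> bool" where
  "frustration_free n M h \<longleftrightarrow> (\<forall>a<M. psd n (h a)) \<and>
     (\<forall>v. is_ground_state n (ham_sum M h) v \<longrightarrow> (\<forall>a<M. \<forall>x<2^n. mat_vec n (h a) v x = 0))"

end

theory Submission
  imports Defs "Jordan_Normal_Form.Char_Poly"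
begin

text \<open>Write H_j for \<open>H(j/T)\<close>. Since H_j \<psi>_j = 0, the mean value theorem gives
  \<open>\<parallel>H_{j+1} \<psi>_j\<parallel> = \<parallel>(H_{j+1} - H_j) \<psi>_j\<parallel> \<le> J/T\<close>. The operator H_{j+1} is positive
  semidefinite with kernel spanned by \<psi>_{j+1}, so its quadratic form is at least \<open>\<Delta> \<parallel>v\<parallel>\<^sup>2\<close> on
  vectors v orthogonal to \<psi>_{j+1}. For \<open>v = \<psi>_j - c \<psi>_{j+1}\<close> with \<open>c = \<langle>\<psi>_{j+1}|\<psi>_j\<rangle>\<close> this
  yields \<open>\<Delta>\<^sup>2 (1 - c\<^sup>2) = \<Delta>\<^sup>2 \<parallel>v\<parallel>\<^sup>2 \<le> \<parallel>H_{j+1} \<psi>_j\<parallel>\<^sup>2 \<le> J\<^sup>2/T\<^sup>2\<close>. Finally \<open>0 \<le> c \<le> 1\<close> because both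
  states are non-negative, so \<open>c \<ge> c\<^sup>2\<close>.

  The lower bound on the orthogonal complement is proved from scratch: the quadratic form
  attains its minimum on the unit sphere of the complement by compactness, a minimiser is an
  eigenvector by the first-order condition, and its eigenvalue is non-zero because the ground
  state is unique.\<close>

lemma inner_q_cnj_commute: "inner_q n u v = cnj (inner_q n v u)"
  unfolding inner_q_def by (simp add: mult.commute)

lemma inner_q_cong:
  "(\<And>x. x < 2^n \<Longrightarrow> u x = u' x) \<Longrightarrow> (\<And>x. x < 2^n \<Longrightarrow> v x = v' x) \<Longrightarrow>
   inner_q n u v = inner_q n u' v'"
  unfolding inner_q_def by (intro sum.cong) auto

lemma vnorm_cong: "(\<And>x. x < 2^n \<Longrightarrow> u x = u' x) \<Longrightarrow> vnorm n u = vnorm n u'"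
  unfolding vnorm_def by (intro arg_cong[where f=sqrt] sum.cong) auto

lemma mat_vec_cong: "(\<And>x. x < 2^n \<Longrightarrow> u x = u' x) \<Longrightarrow> mat_vec n A u = mat_vec n A u'"
  unfolding mat_vec_def by (intro ext sum.cong) auto

lemma inner_q_add_left: "inner_q n (\<lambda>x. a x + b x) u = inner_q n a u + inner_q n b u"
  unfolding inner_q_def by (simp add: sum.distrib algebra_simps)

lemma inner_q_add_right: "inner_q n u (\<lambda>x. a x + b x) = inner_q n u a + inner_q n u b"
  unfolding inner_q_def by (simp add: sum.distrib algebra_simps)

lemma inner_q_diff_left: "inner_q n (\<lambda>x. a x - b x) u = inner_q n a u - inner_q n b u"
  unfolding inner_q_def by (simp add: sum_subtractf algebra_simps)

lemma inner_q_diff_right: "inner_q n u (\<lambda>x. a x - b x) = inner_q n u a - inner_q n u b"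
  unfolding inner_q_def by (simp add: sum_subtractf algebra_simps)

lemma inner_q_scale_left: "inner_q n (\<lambda>x. c * a x) u = cnj c * inner_q n a u"
  unfolding inner_q_def by (simp add: sum_distrib_left algebra_simps)

lemma inner_q_scale_right: "inner_q n u (\<lambda>x. c * a x) = c * inner_q n u a"
  unfolding inner_q_def by (simp add: sum_distrib_left algebra_simps)

lemma mat_vec_add: "mat_vec n A (\<lambda>x. a x + b x) = (\<lambda>x. mat_vec n A a x + mat_vec n A b x)"
  unfolding mat_vec_def by (simp add: sum.distrib algebra_simps)

lemma mat_vec_diff: "mat_vec n A (\<lambda>x. a x - b x) = (\<lambda>x. mat_vec n A a x - mat_vec n A b x)"
  unfolding mat_vec_def by (simp add: sum_subtractf algebra_simps)

lemma mat_vec_scale: "mat_vec n A (\<lambda>x. c * a x) = (\<lambda>x. c * mat_vec n A a x)"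
  unfolding mat_vec_def by (simp add: sum_distrib_left algebra_simps)

lemma vnorm_eq_L2_set: "vnorm n v = L2_set (\<lambda>x. cmod (v x)) {..<2^n}"
  unfolding vnorm_def L2_set_def by simp

lemma vnorm_nonneg: "vnorm n v \<ge> 0"
  unfolding vnorm_def by (simp add: sum_nonneg)

lemma vnorm_scale: "vnorm n (\<lambda>x. c * v x) = cmod c * vnorm n v"
  unfolding vnorm_def
  by (simp add: norm_mult power_mult_distrib sum_distrib_left[symmetric] real_sqrt_mult)

lemma inner_q_self: "inner_q n v v = of_real ((vnorm n v)\<^sup>2)"
proof -
  have "inner_q n v v = (\<Sum>x<2^n. of_real ((cmod (v x))\<^sup>2))"
    unfolding inner_q_def
    by (intro sum.cong refl) (metis complex_norm_square mult.commute of_real_power)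
  also have "\<dots> = of_real ((vnorm n v)\<^sup>2)"
    unfolding vnorm_def by (simp add: sum_nonneg)
  finally show ?thesis .
qed

lemma cmod_inner_q_le: "cmod (inner_q n u v) \<le> vnorm n u * vnorm n v"
proof -
  have "cmod (inner_q n u v) \<le> (\<Sum>x<2^n. cmod (cnj (u x) * v x))"
    unfolding inner_q_def by (rule norm_sum)
  also have "\<dots> = (\<Sum>x<2^n. \<bar>cmod (u x)\<bar> * \<bar>cmod (v x)\<bar>)"
    by (simp add: norm_mult)
  also have "\<dots> \<le> vnorm n u * vnorm n v"
    unfolding vnorm_eq_L2_set by (rule L2_set_mult_ineq)
  finally show ?thesis .
qed

lemma cmod_le_vnorm: "x < 2^n \<Longrightarrow> cmod (v x) \<le> vnorm n v"
  unfolding vnorm_eq_L2_set by (rule member_le_L2_set) auto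

lemma vnorm_eq_0_imp: "vnorm n v = 0 \<Longrightarrow> x < 2^n \<Longrightarrow> v x = 0"
  using cmod_le_vnorm[of x n v] by simp

lemma vnorm_pos: "nonzero_vec n v \<Longrightarrow> vnorm n v > 0"
proof -
  assume "nonzero_vec n v"
  then obtain x where "x < 2^n" "v x \<noteq> 0" unfolding nonzero_vec_def by auto
  then have "0 < cmod (v x)" by simp
  also have "\<dots> \<le> vnorm n v" by (rule cmod_le_vnorm) fact
  finally show ?thesis .
qed

lemma nonzero_vec_if_vnorm_eq_1: "vnorm n v = 1 \<Longrightarrow> nonzero_vec n v"
proof (rule ccontr)
  assume "vnorm n v = 1" "\<not> nonzero_vec n v"
  then have "\<forall>x<2^n. v x = 0" unfolding nonzero_vec_def by auto
  then have "vnorm n v = 0" unfolding vnorm_def by simp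
  with \<open>vnorm n v = 1\<close> show False by simp
qed

lemma exists_orthogonal_nonzero_vec:
  assumes "n \<ge> 1"
  shows "\<exists>u. inner_q n \<phi> u = 0 \<and> nonzero_vec n u"
proof -
  have "(2::nat)^1 \<le> 2^n" using assms by (intro power_increasing) auto
  then have one: "(1::nat) < 2^n" by simp
  show ?thesis
  proof (cases "\<phi> 0 = 0")
    case True
    define u :: cvec where "u = (\<lambda>x. if x = 0 then 1 else 0)"
    have "inner_q n \<phi> u = (\<Sum>x<(2::nat)^n. if x = 0 then cnj (\<phi> 0) else 0)"
      unfolding inner_q_def u_def by (intro sum.cong) auto
    also have "\<dots> = 0" using True by simp
    finally have "inner_q n \<phi> u = 0" .
    moreover have "u 0 \<noteq> 0" unfolding u_def by simp
    ultimately show ?thesis unfolding nonzero_vec_def using one by (metis pos2 zero_less_power)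
  next
    case False
    define u :: cvec
      where "u = (\<lambda>x. (if x = 0 then cnj (\<phi> 1) else 0) + (if x = 1 then - cnj (\<phi> 0) else 0))"
    have "inner_q n \<phi> u = (\<Sum>x<(2::nat)^n. (if x = 0 then cnj (\<phi> 0) * cnj (\<phi> 1) else 0))
       + (\<Sum>x<(2::nat)^n. (if x = 1 then - cnj (\<phi> 1) * cnj (\<phi> 0) else 0))"
      unfolding inner_q_def u_def sum.distrib[symmetric] by (intro sum.cong) (auto simp: algebra_simps)
    also have "\<dots> = 0" using one by simp
    finally have "inner_q n \<phi> u = 0" .
    moreover have "u 1 \<noteq> 0" using False unfolding u_def by simp
    ultimately show ?thesis using one unfolding nonzero_vec_def by blast
  qed
qed

lemma hermitian_inner_q_mat_vec:
  assumes "hermitian n A"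
  shows "inner_q n u (mat_vec n A v) = inner_q n (mat_vec n A u) v"
proof -
  have "inner_q n u (mat_vec n A v) = (\<Sum>x<2^n. \<Sum>y<2^n. cnj (u x) * (A x y * v y))"
    unfolding inner_q_def mat_vec_def by (simp only: sum_distrib_left)
  also have "\<dots> = (\<Sum>y<2^n. \<Sum>x<2^n. cnj (u x) * (A x y * v y))" by (rule sum.swap)
  also have "\<dots> = (\<Sum>y<2^n. (\<Sum>x<2^n. cnj (A y x * u x)) * v y)"
    unfolding sum_distrib_right
  proof (intro sum.cong refl)
    fix y x assume "y \<in> {..<(2::nat)^n}" "x \<in> {..<(2::nat)^n}"
    then have "A x y = cnj (A y x)" using assms unfolding hermitian_def by blast
    then show "cnj (u x) * (A x y * v y) = cnj (A y x * u x) * v y" by simp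
  qed
  also have "\<dots> = inner_q n (mat_vec n A u) v"
    unfolding inner_q_def mat_vec_def by (simp only: cnj_sum)
  finally show ?thesis .
qed

lemma mat_vec_ham_sum: "mat_vec n (ham_sum M h) v x = (\<Sum>a<M. mat_vec n (h a) v x)"
  unfolding mat_vec_def ham_sum_def by (simp add: sum_distrib_right sum.swap[of _ "{..<M}"])

lemma inner_q_ham_sum:
  "inner_q n u (mat_vec n (ham_sum M h) v) = (\<Sum>a<M. inner_q n u (mat_vec n (h a) v))"
  unfolding inner_q_def mat_vec_ham_sum by (simp add: sum_distrib_left sum.swap[of _ "{..<M}"])

lemma psd_ham_sum:
  assumes psd: "\<forall>a<M. psd n (h a)"
  shows "psd n (ham_sum M h)"
  unfolding psd_def
proof (intro conjI allI)
  show "hermitian n (ham_sum M h)"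
    unfolding hermitian_def ham_sum_def cnj_sum
  proof (intro allI impI sum.cong refl)
    fix x y :: nat and a assume "x < 2^n" "y < 2^n" "a \<in> {..<M}"
    then show "h a x y = cnj (h a y x)" using psd unfolding psd_def hermitian_def by blast
  qed
  fix v
  have "inner_q n v (mat_vec n (h a) v) \<in> \<real>" if "a \<in> {..<M}" for a
    using psd that unfolding psd_def by blast
  then show "inner_q n v (mat_vec n (ham_sum M h) v) \<in> \<real>"
    unfolding inner_q_ham_sum by (rule sum_in_Reals)
  have "0 \<le> Re (inner_q n v (mat_vec n (h a) v))" if "a \<in> {..<M}" for a
    using psd that unfolding psd_def by blast
  then show "0 \<le> Re (inner_q n v (mat_vec n (ham_sum M h) v))"
    unfolding inner_q_ham_sum Re_sum by (rule sum_nonneg)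
qed

lemma frustration_free_psd: "frustration_free n M h \<Longrightarrow> psd n (ham_sum M h)"
  unfolding frustration_free_def by (blast intro: psd_ham_sum)

lemma vnorm_mat_vec_le_opnorm:
  assumes "vnorm n v = 1"
  shows "vnorm n (mat_vec n A v) \<le> opnorm n A"
proof -
  let ?B = "\<Sum>x<2^n. \<Sum>y<(2::nat)^n. cmod (A x y)"
  \<comment> \<open>the supremum defining \<open>opnorm\<close> is taken over a bounded set, so it is not a junk value\<close>
  have "vnorm n (mat_vec n A w) \<le> ?B" if "vnorm n w = 1" for w
  proof -
    have "vnorm n (mat_vec n A w) \<le> (\<Sum>x<2^n. \<bar>cmod (mat_vec n A w x)\<bar>)"
      unfolding vnorm_eq_L2_set by (rule L2_set_le_sum_abs)
    also have "\<dots> \<le> ?B"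
    proof (intro sum_mono)
      fix x assume "x \<in> {..<(2::nat)^n}"
      have "\<bar>cmod (mat_vec n A w x)\<bar> \<le> (\<Sum>y<2^n. cmod (A x y * w y))"
        unfolding mat_vec_def by (simp add: norm_sum)
      also have "\<dots> \<le> (\<Sum>y<2^n. cmod (A x y))"
      proof (intro sum_mono)
        fix y assume "y \<in> {..<(2::nat)^n}"
        then have "cmod (w y) \<le> 1" using cmod_le_vnorm[of y n w] that by simp
        then show "cmod (A x y * w y) \<le> cmod (A x y)"
          by (simp add: norm_mult mult_left_le)
      qed
      finally show "\<bar>cmod (mat_vec n A w x)\<bar> \<le> (\<Sum>y<2^n. cmod (A x y))" .
    qed
    finally show ?thesis .
  qed
  then have "bdd_above ((\<lambda>v. vnorm n (mat_vec n A v)) ` {v. vnorm n v = 1})"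
    by (intro bdd_aboveI2[where M="?B"]) auto
  then show ?thesis unfolding opnorm_def
    by (rule cSUP_upper[rotated]) (use assms in simp)
qed

text \<open>The scalar mean value inequality is applied to \<open>t \<mapsto> \<langle>w|G(t)\<psi>\<rangle>\<close> with
  \<open>w = G(s\<^sub>2)\<psi> - G(s\<^sub>1)\<psi>\<close>.\<close>

lemma vnorm_mat_vec_diff_le:
  fixes G D :: "real \<Rightarrow> cmat"
  assumes "convex S"
    and der: "\<forall>s\<in>S. \<forall>x<2^n. \<forall>y<2^n. ((\<lambda>t. G t x y) has_vector_derivative D s x y) (at s within S)"
    and bound: "\<forall>s\<in>S. opnorm n (D s) \<le> J"
    and unit: "vnorm n \<psi> = 1"
    and s: "s\<^sub>1 \<in> S" "s\<^sub>2 \<in> S"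
  shows "vnorm n (\<lambda>x. mat_vec n (G s\<^sub>2) \<psi> x - mat_vec n (G s\<^sub>1) \<psi> x) \<le> J * \<bar>s\<^sub>2 - s\<^sub>1\<bar>"
proof -
  define w where "w = (\<lambda>x. mat_vec n (G s\<^sub>2) \<psi> x - mat_vec n (G s\<^sub>1) \<psi> x)"
  define f where "f t = inner_q n w (mat_vec n (G t) \<psi>)" for t
  define Df where "Df t = inner_q n w (mat_vec n (D t) \<psi>)" for t
  have "(f has_vector_derivative Df t) (at t within S)" if "t \<in> S" for t
    unfolding f_def Df_def inner_q_def mat_vec_def
    by (intro has_vector_derivative_sum has_vector_derivative_mult_right
        has_vector_derivative_mult_left) (use der that in auto)
  moreover have "norm (Df t) \<le> vnorm n w * J" if "t \<in> S" for t
  proof -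
    have "norm (Df t) \<le> vnorm n w * vnorm n (mat_vec n (D t) \<psi>)"
      unfolding Df_def by (rule cmod_inner_q_le)
    also have "\<dots> \<le> vnorm n w * J"
      using vnorm_mat_vec_le_opnorm[OF unit, of "D t"] bound that
      by (intro mult_left_mono vnorm_nonneg) auto
    finally show ?thesis .
  qed
  moreover have "onorm (\<lambda>h. h *\<^sub>R Df t) = norm (Df t)" for t
    using onorm_scaleR_left[OF bounded_linear_ident, of "Df t"] by (simp add: onorm_id)
  ultimately have "norm (f s\<^sub>2 - f s\<^sub>1) \<le> (vnorm n w * J) * norm (s\<^sub>2 - s\<^sub>1)"
    using \<open>convex S\<close> s
    by (intro differentiable_bound[where f' = "\<lambda>t h. h *\<^sub>R Df t" and S = S])
      (auto simp: has_vector_derivative_def)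
  moreover have "f s\<^sub>2 - f s\<^sub>1 = inner_q n w w"
    unfolding f_def inner_q_def w_def by (simp add: sum_subtractf[symmetric] algebra_simps)
  ultimately have "vnorm n w * vnorm n w \<le> vnorm n w * (J * \<bar>s\<^sub>2 - s\<^sub>1\<bar>)"
    by (simp add: inner_q_self norm_mult vnorm_nonneg power2_eq_square mult_ac del: of_real_power)
  moreover have "0 \<le> J"
    using vnorm_nonneg[of n "mat_vec n (D s\<^sub>1) \<psi>"] vnorm_mat_vec_le_opnorm[OF unit] bound s(1)
    by (meson order_trans)
  ultimately show ?thesis
    unfolding w_def[symmetric] using vnorm_nonneg[of n w]
    by (cases "vnorm n w = 0") (auto simp: mult_le_cancel_left)
qed

lemma finite_eigenvalues: "finite (eigenvalues n A)"
proof -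
  define N where "N = (2::nat)^n"
  define B :: "complex mat" where "B = mat N N (\<lambda>(i,j). A i j)"
  have B: "B \<in> carrier_mat N N" unfolding B_def by simp
  have "eigenvalues n A \<subseteq> Re ` {z. poly (char_poly B) z = 0}"
  proof
    fix \<mu> assume "\<mu> \<in> eigenvalues n A"
    then obtain v where nz: "nonzero_vec n v" and ev: "\<forall>x<2^n. mat_vec n A v x = of_real \<mu> * v x"
      unfolding eigenvalues_def by auto
    define v' where "v' = vec N (\<lambda>i. v i)"
    have "eigenvector B v' (of_real \<mu>)"
      unfolding eigenvector_def
    proof (intro conjI)
      show "v' \<in> carrier_vec (dim_row B)" unfolding v'_def B_def by simp
      show "v' \<noteq> 0\<^sub>v (dim_row B)"
      proof
        assume "v' = 0\<^sub>v (dim_row B)"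
        then have "\<forall>i<N. v i = 0" unfolding v'_def B_def
          by (metis dim_row_mat(1) index_vec index_zero_vec(1))
        then show False using nz unfolding nonzero_vec_def N_def by auto
      qed
      show "B *\<^sub>v v' = complex_of_real \<mu> \<cdot>\<^sub>v v'"
      proof (rule eq_vecI)
        fix i assume "i < dim_vec (complex_of_real \<mu> \<cdot>\<^sub>v v')"
        then have i: "i < N" unfolding v'_def by simp
        have "(B *\<^sub>v v') $ i = (\<Sum>j\<in>{0..<N}. A i j * v j)"
          using i unfolding B_def v'_def by (simp add: scalar_prod_def)
        also have "\<dots> = mat_vec n A v i" unfolding mat_vec_def N_def
          by (simp add: atLeast0LessThan)
        also have "\<dots> = of_real \<mu> * v i" using ev i unfolding N_def by simp
        finally show "(B *\<^sub>v v') $ i = (complex_of_real \<mu> \<cdot>\<^sub>v v') $ i"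
          using i unfolding v'_def by simp
      qed (simp add: B_def v'_def)
    qed
    then have "eigenvalue B (of_real \<mu>)" unfolding eigenvalue_def by blast
    then have "poly (char_poly B) (of_real \<mu>) = 0" using eigenvalue_root_char_poly[OF B] by simp
    then show "\<mu> \<in> Re ` {z. poly (char_poly B) z = 0}" by force
  qed
  moreover have "char_poly B \<noteq> 0" using degree_monic_char_poly[OF B] by auto
  then have "finite {z. poly (char_poly B) z = 0}" by (rule poly_roots_finite)
  ultimately show ?thesis using finite_subset by blast
qed

lemma eigenvalue_nonneg_if_psd:
  assumes "psd n A" and "\<mu> \<in> eigenvalues n A"
  shows "\<mu> \<ge> 0"
proof -
  obtain v where nz: "nonzero_vec n v" and ev: "\<forall>x<2^n. mat_vec n A v x = of_real \<mu> * v x"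
    using assms(2) unfolding eigenvalues_def by auto
  have "inner_q n v (mat_vec n A v) = inner_q n v (\<lambda>x. of_real \<mu> * v x)"
    using ev by (intro inner_q_cong) auto
  then have "Re (inner_q n v (mat_vec n A v)) = \<mu> * (vnorm n v)\<^sup>2"
    by (simp add: inner_q_scale_right inner_q_self)
  moreover have "0 \<le> Re (inner_q n v (mat_vec n A v))" using assms(1) unfolding psd_def by blast
  moreover have "(vnorm n v)\<^sup>2 > 0" using vnorm_pos[OF nz] by simp
  ultimately show ?thesis by (simp add: zero_le_mult_iff)
qed

lemma ground_energy_eq_0:
  assumes "psd n A" and "vnorm n \<phi> = 1" and "\<forall>x<2^n. mat_vec n A \<phi> x = 0"
  shows "ground_energy n A = 0"
proof -
  have "0 \<in> eigenvalues n A" unfolding eigenvalues_def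
    using nonzero_vec_if_vnorm_eq_1 assms(2,3) by auto
  then show ?thesis unfolding ground_energy_def
    using eigenvalue_nonneg_if_psd[OF assms(1)] by (intro Min_eqI finite_eigenvalues) auto
qed

lemma continuous_map_complex_mult [continuous_intros]:
  fixes f g :: "'a \<Rightarrow> complex"
  shows "continuous_map X euclidean f \<Longrightarrow> continuous_map X euclidean g \<Longrightarrow>
    continuous_map X euclidean (\<lambda>x. f x * g x)"
  by (simp add: continuous_map_atin tendsto_mult)

lemma continuous_map_cnj [continuous_intros]:
  "continuous_map X euclidean f \<Longrightarrow> continuous_map X euclidean (\<lambda>x. cnj (f x))"
  by (simp add: continuous_map_atin tendsto_cnj)

lemma continuous_map_Re [continuous_intros]:
  "continuous_map X euclidean f \<Longrightarrow> continuous_map X euclideanreal (\<lambda>x. Re (f x))"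
  by (simp add: continuous_map_atin tendsto_Re)

text \<open>Only the entries below \<open>2^n\<close> of a vector matter, so compactness is argued in the product
  topology over these coordinates.\<close>

abbreviation coord_topology :: "nat \<Rightarrow> cvec topology" where
  "coord_topology n \<equiv> product_topology (\<lambda>_. euclidean) {..<2^n}"

lemma continuous_map_coord [continuous_intros]:
  "x < 2^n \<Longrightarrow> continuous_map (coord_topology n) euclidean (\<lambda>v. v x)"
  using continuous_map_product_projection[of x "{..<2^n}" "\<lambda>_. euclidean"] by simp

lemma continuous_map_inner_q_right:
  "continuous_map (coord_topology n) euclidean (\<lambda>v. inner_q n u v)"
  unfolding inner_q_def by (intro continuous_intros) auto

lemma continuous_map_vnorm: "continuous_map (coord_topology n) euclideanreal (vnorm n)"
  unfolding vnorm_def by (intro continuous_intros) auto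

lemma continuous_map_quadratic_form:
  "continuous_map (coord_topology n) euclideanreal (\<lambda>v. Re (inner_q n v (mat_vec n A v)))"
  unfolding inner_q_def mat_vec_def by (intro continuous_intros) auto

lemma compactin_orthogonal_unit_sphere:
  "compactin (coord_topology n)
     {v \<in> topspace (coord_topology n). vnorm n v = 1 \<and> inner_q n \<phi> v = 0}"
proof -
  let ?X = "coord_topology n"
  have "{v \<in> topspace ?X. vnorm n v = 1 \<and> inner_q n \<phi> v = 0} =
      ({v \<in> topspace ?X. vnorm n v \<in> {1}} \<inter> {v \<in> topspace ?X. inner_q n \<phi> v \<in> {0}})
      \<inter> PiE {..<2^n} (\<lambda>_. cball 0 1)"
  proof (intro equalityI subsetI)
    fix v assume v: "v \<in> {v \<in> topspace ?X. vnorm n v = 1 \<and> inner_q n \<phi> v = 0}"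
    have "v x \<in> cball 0 1" if "x < 2^n" for x
      using cmod_le_vnorm[OF that, of v] v by simp
    with v show "v \<in> ({v \<in> topspace ?X. vnorm n v \<in> {1}} \<inter> {v \<in> topspace ?X. inner_q n \<phi> v \<in> {0}})
      \<inter> PiE {..<2^n} (\<lambda>_. cball 0 1)"
      by (auto simp: PiE_iff topspace_product_topology)
  qed auto
  moreover have "closedin ?X ({v \<in> topspace ?X. vnorm n v \<in> {1}} \<inter>
      {v \<in> topspace ?X. inner_q n \<phi> v \<in> {0}})"
    by (intro closedin_Int closedin_continuous_map_preimage[OF continuous_map_vnorm]
        closedin_continuous_map_preimage[OF continuous_map_inner_q_right]) simp_all
  moreover have "compactin ?X (PiE {..<2^n} (\<lambda>_. cball 0 1))"
    by (simp add: compactin_PiE)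
  ultimately show ?thesis by (simp add: closed_Int_compactin)
qed

lemma normalized_in_orthogonal_unit_sphere:
  assumes "inner_q n \<phi> w = 0" and "vnorm n w \<noteq> 0"
  defines "w' \<equiv> restrict (\<lambda>x. of_real (1 / vnorm n w) * w x) {..<2^n}"
  shows "w' \<in> {v \<in> topspace (coord_topology n). vnorm n v = 1 \<and> inner_q n \<phi> v = 0}"
    and "Re (inner_q n w' (mat_vec n A w')) = Re (inner_q n w (mat_vec n A w)) / (vnorm n w)\<^sup>2"
proof -
  have pos: "vnorm n w > 0" using assms(2) vnorm_nonneg[of n w] by simp
  define c :: complex where "c = of_real (1 / vnorm n w)"
  let ?u = "\<lambda>x. c * w x"
  have eq: "x < 2^n \<Longrightarrow> w' x = ?u x" for x unfolding w'_def c_def by simp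
  have "vnorm n w' = vnorm n ?u" by (rule vnorm_cong) (rule eq)
  also have "\<dots> = 1" unfolding vnorm_scale c_def using pos by (simp add: norm_divide)
  finally have "vnorm n w' = 1" .
  moreover have "inner_q n \<phi> w' = inner_q n \<phi> ?u" by (rule inner_q_cong) (simp_all add: eq)
  then have "inner_q n \<phi> w' = 0" unfolding inner_q_scale_right assms(1) by simp
  moreover have "w' \<in> topspace (coord_topology n)"
    unfolding w'_def by (simp add: topspace_product_topology)
  ultimately show "w' \<in> {v \<in> topspace (coord_topology n). vnorm n v = 1 \<and> inner_q n \<phi> v = 0}"
    by simp
  have "mat_vec n A w' = mat_vec n A ?u" by (rule mat_vec_cong) (rule eq)
  then have "inner_q n w' (mat_vec n A w') = inner_q n ?u (mat_vec n A ?u)"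
    by (intro inner_q_cong) (simp_all add: eq)
  also have "\<dots> = cnj c * (c * inner_q n w (mat_vec n A w))"
    unfolding mat_vec_scale inner_q_scale_left inner_q_scale_right ..
  also have "\<dots> = of_real (1 / (vnorm n w)\<^sup>2) * inner_q n w (mat_vec n A w)"
    unfolding c_def by (simp add: power2_eq_square)
  finally show "Re (inner_q n w' (mat_vec n A w')) = Re (inner_q n w (mat_vec n A w)) / (vnorm n w)\<^sup>2"
    by simp
qed

lemma quadratic_form_attains_min_on_orthogonal:
  assumes "inner_q n \<phi> u = 0" and "nonzero_vec n u"
  obtains v where "inner_q n \<phi> v = 0" and "vnorm n v = 1"
    and "\<And>w. inner_q n \<phi> w = 0 \<Longrightarrow>
      Re (inner_q n v (mat_vec n A v)) * (vnorm n w)\<^sup>2 \<le> Re (inner_q n w (mat_vec n A w))"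
proof -
  define R where "R v = Re (inner_q n v (mat_vec n A v))" for v
  define C where "C = {v \<in> topspace (coord_topology n). vnorm n v = 1 \<and> inner_q n \<phi> v = 0}"
  have "compactin euclideanreal (R ` C)"
    unfolding C_def R_def
    by (rule image_compactin[OF compactin_orthogonal_unit_sphere continuous_map_quadratic_form])
  moreover have "vnorm n u \<noteq> 0" using vnorm_pos[OF assms(2)] by simp
  then have "R ` C \<noteq> {}"
    using normalized_in_orthogonal_unit_sphere(1)[OF assms(1)] unfolding C_def by blast
  ultimately obtain v where v: "v \<in> C" and min: "\<And>t. t \<in> C \<Longrightarrow> R v \<le> R t"
    using compact_attains_inf[of "R ` C"] by auto
  have "R v * (vnorm n w)\<^sup>2 \<le> R w" if w: "inner_q n \<phi> w = 0" for w
  proof (cases "vnorm n w = 0")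
    case True
    then have "inner_q n w (mat_vec n A w) = 0"
      unfolding inner_q_def using vnorm_eq_0_imp[OF True] by simp
    then show ?thesis using True unfolding R_def by simp
  next
    case False
    define w' where "w' = restrict (\<lambda>x. of_real (1 / vnorm n w) * w x) {..<2^n}"
    have "R v \<le> R w'"
      using min normalized_in_orthogonal_unit_sphere(1)[OF w False] unfolding C_def w'_def by blast
    also have "R w' = R w / (vnorm n w)\<^sup>2"
      using normalized_in_orthogonal_unit_sphere(2)[OF w False] unfolding R_def w'_def .
    finally show ?thesis using False vnorm_nonneg[of n w] by (simp add: field_simps)
  qed
  with v show thesis unfolding C_def R_def by (intro that) auto
qed

lemma quadratic_form_add_scaled:
  assumes "hermitian n A"
  shows "Re (inner_q n (\<lambda>x. v x + of_real t * r x) (mat_vec n A (\<lambda>x. v x + of_real t * r x))) =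
    Re (inner_q n v (mat_vec n A v)) + 2 * t * Re (inner_q n r (mat_vec n A v))
      + t\<^sup>2 * Re (inner_q n r (mat_vec n A r))"
proof -
  have "inner_q n v (mat_vec n A r) = cnj (inner_q n r (mat_vec n A v))"
    using hermitian_inner_q_mat_vec[OF assms, of v r] inner_q_cnj_commute[of n "mat_vec n A v" r]
    by simp
  then show ?thesis
    unfolding mat_vec_add mat_vec_scale inner_q_add_left inner_q_add_right inner_q_scale_left
      inner_q_scale_right
    by (simp add: algebra_simps power2_eq_square)
qed

lemma vnorm_add_scaled_sq:
  "(vnorm n (\<lambda>x. v x + of_real t * r x))\<^sup>2 =
    (vnorm n v)\<^sup>2 + 2 * t * Re (inner_q n r v) + t\<^sup>2 * (vnorm n r)\<^sup>2"
proof -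
  have "(vnorm n (\<lambda>x. v x + of_real t * r x))\<^sup>2 = Re (inner_q n (\<lambda>x. v x + of_real t * r x) (\<lambda>x. v x + of_real t * r x))"
    by (simp add: inner_q_self)
  also have "\<dots> = (vnorm n v)\<^sup>2 + 2 * t * Re (inner_q n r v) + t\<^sup>2 * (vnorm n r)\<^sup>2"
    unfolding inner_q_add_left inner_q_add_right inner_q_scale_left inner_q_scale_right
      inner_q_cnj_commute[of n v r] inner_q_self
    by (simp add: algebra_simps power2_eq_square)
  finally show ?thesis .
qed

lemma linear_coeff_eq_0_if_quadratic_nonneg:
  fixes a c :: real
  assumes "\<And>t. 0 \<le> 2 * t * a + t\<^sup>2 * c"
  shows "a = 0"
proof (rule ccontr)
  assume a: "a \<noteq> 0"
  define s where "s = 1 / (\<bar>c\<bar> + 1)"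
  have s: "s > 0" "s * c < 2" unfolding s_def
    by (auto simp: field_simps abs_if split: if_splits)
  have "2 * (- a * s) * a + (- a * s)\<^sup>2 * c = a\<^sup>2 * s * (s * c - 2)"
    by (simp add: power2_eq_square algebra_simps)
  also have "\<dots> < 0" using a s by (intro mult_pos_neg) auto
  finally show False using assms[of "- a * s"] by simp
qed

text \<open>First-order condition: perturbing the minimiser \<open>v\<close> along \<open>r = A v - \<mu> v\<close>, which stays
  orthogonal to \<open>\<phi>\<close> because \<open>A\<close> is Hermitian and \<open>A \<phi> = 0\<close>, changes the Rayleigh quotient at
  first order by \<open>2 t \<parallel>r\<parallel>\<^sup>2\<close>.\<close>

lemma orthogonal_minimizer_is_eigenvector:
  assumes herm: "hermitian n A" and ker: "\<forall>x<2^n. mat_vec n A \<phi> x = 0"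
    and orth: "inner_q n \<phi> v = 0" and unit: "vnorm n v = 1"
    and min: "\<And>w. inner_q n \<phi> w = 0 \<Longrightarrow> \<mu> * (vnorm n w)\<^sup>2 \<le> Re (inner_q n w (mat_vec n A w))"
    and \<mu>: "\<mu> = Re (inner_q n v (mat_vec n A v))"
  shows "\<forall>x<2^n. mat_vec n A v x = of_real \<mu> * v x"
proof -
  define r where "r = (\<lambda>x. mat_vec n A v x - of_real \<mu> * v x)"
  have "inner_q n \<phi> (mat_vec n A v) = inner_q n (mat_vec n A \<phi>) v"
    by (rule hermitian_inner_q_mat_vec[OF herm])
  also have "\<dots> = 0" using ker by (simp add: inner_q_def)
  finally have "inner_q n \<phi> r = 0"
    unfolding r_def inner_q_diff_right inner_q_scale_right orth by simp
  then have orth_perturbed: "inner_q n \<phi> (\<lambda>x. v x + of_real t * r x) = 0" for t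
    unfolding inner_q_add_right inner_q_scale_right orth by simp
  have "inner_q n r (mat_vec n A v) - of_real \<mu> * inner_q n r v = inner_q n r r"
    unfolding r_def inner_q_diff_right inner_q_scale_right ..
  then have "Re (inner_q n r (mat_vec n A v) - of_real \<mu> * inner_q n r v) = Re (inner_q n r r)"
    by (rule arg_cong)
  then have r_sq: "Re (inner_q n r (mat_vec n A v)) - \<mu> * Re (inner_q n r v) = (vnorm n r)\<^sup>2"
    by (simp add: inner_q_self)
  have "0 \<le> 2 * t * (vnorm n r)\<^sup>2 + t\<^sup>2 * (Re (inner_q n r (mat_vec n A r)) - \<mu> * (vnorm n r)\<^sup>2)"
    for t
    using min[OF orth_perturbed, of t] r_sq unit
    unfolding quadratic_form_add_scaled[OF herm] vnorm_add_scaled_sq \<mu>[symmetric]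
    by (simp add: algebra_simps)
  then have "(vnorm n r)\<^sup>2 = 0" by (rule linear_coeff_eq_0_if_quadratic_nonneg)
  then show ?thesis using vnorm_eq_0_imp[of n r] unfolding r_def by simp
qed

lemma exists_excited_eigenvalue:
  assumes psd: "psd n A" and ugs: "unique_ground_state n A \<phi>"
    and ker: "\<forall>x<2^n. mat_vec n A \<phi> x = 0" and unit: "vnorm n \<phi> = 1" and "n \<ge> 1"
  obtains \<mu> where "\<mu> \<in> eigenvalues n A" and "\<mu> \<noteq> 0"
    and "\<And>w. inner_q n \<phi> w = 0 \<Longrightarrow> \<mu> * (vnorm n w)\<^sup>2 \<le> Re (inner_q n w (mat_vec n A w))"
proof -
  obtain u where "inner_q n \<phi> u = 0" "nonzero_vec n u"
    using exists_orthogonal_nonzero_vec[OF \<open>n \<ge> 1\<close>] by blast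
  then obtain v where orth: "inner_q n \<phi> v = 0" and v_unit: "vnorm n v = 1"
    and min: "\<And>w. inner_q n \<phi> w = 0 \<Longrightarrow>
      Re (inner_q n v (mat_vec n A v)) * (vnorm n w)\<^sup>2 \<le> Re (inner_q n w (mat_vec n A w))"
    using quadratic_form_attains_min_on_orthogonal[where A = A] by blast
  define \<mu> where "\<mu> = Re (inner_q n v (mat_vec n A v))"
  have herm: "hermitian n A" using psd unfolding psd_def by blast
  have ev: "\<forall>x<2^n. mat_vec n A v x = of_real \<mu> * v x"
    using orthogonal_minimizer_is_eigenvector[OF herm ker orth v_unit] min \<mu>_def by blast
  have nz: "nonzero_vec n v" by (rule nonzero_vec_if_vnorm_eq_1[OF v_unit])
  have "\<mu> \<noteq> 0"
  proof
    assume "\<mu> = 0"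
    then have "is_ground_state n A v"
      unfolding is_ground_state_def ground_energy_eq_0[OF psd unit ker] using nz ev by simp
    then obtain c where c: "\<forall>x<2^n. v x = c * \<phi> x"
      using ugs unfolding unique_ground_state_def by blast
    have "inner_q n \<phi> v = inner_q n \<phi> (\<lambda>x. c * \<phi> x)" using c by (intro inner_q_cong) auto
    then have "c = 0" using orth unit by (simp add: inner_q_scale_right inner_q_self)
    then have "vnorm n v = 0" using c by (simp add: vnorm_def)
    then show False using v_unit by simp
  qed
  moreover have "\<mu> \<in> eigenvalues n A" unfolding eigenvalues_def using nz ev by auto
  ultimately show thesis using min that unfolding \<mu>_def by blast
qed

lemma spectral_gap_eq_Min_nonzero_eigenvalues:
  assumes "psd n A" and "vnorm n \<phi> = 1" and "\<forall>x<2^n. mat_vec n A \<phi> x = 0"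
  shows "spectral_gap n A = Min (eigenvalues n A - {0})"
  unfolding spectral_gap_def ground_energy_eq_0[OF assms] by simp

lemma spectral_gap_pos:
  assumes "psd n A" and "unique_ground_state n A \<phi>"
    and "\<forall>x<2^n. mat_vec n A \<phi> x = 0" and "vnorm n \<phi> = 1" and "n \<ge> 1"
  shows "spectral_gap n A > 0"
proof -
  obtain \<mu> where "\<mu> \<in> eigenvalues n A - {0}"
    using exists_excited_eigenvalue[OF assms] by blast
  then have "Min (eigenvalues n A - {0}) \<in> eigenvalues n A - {0}"
    using finite_eigenvalues by (intro Min_in) auto
  then show ?thesis
    unfolding spectral_gap_eq_Min_nonzero_eigenvalues[OF assms(1,4,3)]
    using eigenvalue_nonneg_if_psd[OF assms(1)] by fastforce
qed

lemma spectral_gap_le_quadratic_form: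
  assumes "psd n A" and "unique_ground_state n A \<phi>"
    and "\<forall>x<2^n. mat_vec n A \<phi> x = 0" and "vnorm n \<phi> = 1" and "n \<ge> 1"
    and "inner_q n \<phi> w = 0"
  shows "spectral_gap n A * (vnorm n w)\<^sup>2 \<le> Re (inner_q n w (mat_vec n A w))"
proof -
  obtain \<mu> where \<mu>: "\<mu> \<in> eigenvalues n A - {0}"
    and min: "\<mu> * (vnorm n w)\<^sup>2 \<le> Re (inner_q n w (mat_vec n A w))"
    using exists_excited_eigenvalue[OF assms(1-5)] assms(6) by blast
  have "spectral_gap n A \<le> \<mu>"
    unfolding spectral_gap_eq_Min_nonzero_eigenvalues[OF assms(1,4,3)]
    using finite_eigenvalues \<mu> by (intro Min_le) auto
  then have "spectral_gap n A * (vnorm n w)\<^sup>2 \<le> \<mu> * (vnorm n w)\<^sup>2"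
    by (intro mult_right_mono) auto
  with min show ?thesis by linarith
qed

text \<open>The component \<open>v = \<psi> - \<langle>\<phi>|\<psi>\<rangle> \<phi>\<close> of \<open>\<psi>\<close> orthogonal to the kernel vector \<open>\<phi>\<close> has
  \<open>A v = A \<psi>\<close> and \<open>\<parallel>v\<parallel>\<^sup>2 = 1 - |\<langle>\<phi>|\<psi>\<rangle>|\<^sup>2\<close>.\<close>

lemma gap_sq_mult_overlap_deficit_le:
  assumes ker: "\<forall>x<2^n. mat_vec n A \<phi> x = 0"
    and \<phi>_unit: "vnorm n \<phi> = 1" and \<psi>_unit: "vnorm n \<psi> = 1" and "0 \<le> g"
    and gap: "\<And>w. inner_q n \<phi> w = 0 \<Longrightarrow> g * (vnorm n w)\<^sup>2 \<le> Re (inner_q n w (mat_vec n A w))"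
  shows "g\<^sup>2 * (1 - (cmod (inner_q n \<phi> \<psi>))\<^sup>2) \<le> (vnorm n (mat_vec n A \<psi>))\<^sup>2"
proof -
  define c where "c = inner_q n \<phi> \<psi>"
  define v where "v = (\<lambda>x. \<psi> x - c * \<phi> x)"
  have \<phi>\<phi>: "inner_q n \<phi> \<phi> = 1" and \<psi>\<psi>: "inner_q n \<psi> \<psi> = 1"
    using \<phi>_unit \<psi>_unit by (simp_all add: inner_q_self)
  have "inner_q n \<phi> v = 0"
    unfolding v_def inner_q_diff_right inner_q_scale_right \<phi>\<phi> c_def by simp
  then have "g * (vnorm n v)\<^sup>2 \<le> Re (inner_q n v (mat_vec n A v))" by (rule gap)
  also have "inner_q n v (mat_vec n A v) = inner_q n v (mat_vec n A \<psi>)"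
    using ker by (intro inner_q_cong) (simp_all add: v_def mat_vec_diff mat_vec_scale)
  also have "Re (inner_q n v (mat_vec n A \<psi>)) \<le> vnorm n v * vnorm n (mat_vec n A \<psi>)"
    using complex_Re_le_cmod cmod_inner_q_le by (rule order_trans)
  finally have "g * vnorm n v \<le> vnorm n (mat_vec n A \<psi>)"
    using vnorm_nonneg[of n v] vnorm_nonneg[of n "mat_vec n A \<psi>"]
    by (cases "vnorm n v = 0") (auto simp: power2_eq_square mult.assoc mult_le_cancel_left)
  then have "(g * vnorm n v)\<^sup>2 \<le> (vnorm n (mat_vec n A \<psi>))\<^sup>2"
    using \<open>0 \<le> g\<close> vnorm_nonneg[of n v] by (intro power_mono) auto
  moreover have "inner_q n v v = of_real (1 - (cmod c)\<^sup>2)"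
    using inner_q_cnj_commute[of n \<psi> \<phi>]
    unfolding v_def inner_q_diff_left inner_q_diff_right inner_q_scale_left inner_q_scale_right
      \<phi>\<phi> \<psi>\<psi> c_def[symmetric]
    by (simp add: complex_norm_square[symmetric] algebra_simps del: of_real_power)
  then have "(vnorm n v)\<^sup>2 = 1 - (cmod c)\<^sup>2" unfolding inner_q_self of_real_eq_iff .
  ultimately show ?thesis unfolding c_def by (simp add: power_mult_distrib)
qed

lemma overlap_deficit_le_if_le_spectral_gap:
  assumes "psd n A" and "unique_ground_state n A \<phi>"
    and "\<forall>x<2^n. mat_vec n A \<phi> x = 0" and "vnorm n \<phi> = 1" and "n \<ge> 1"
    and "vnorm n \<psi> = 1" and "0 \<le> g" and "g \<le> spectral_gap n A"
  shows "g\<^sup>2 * (1 - (cmod (inner_q n \<phi> \<psi>))\<^sup>2) \<le> (vnorm n (mat_vec n A \<psi>))\<^sup>2"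
proof (rule gap_sq_mult_overlap_deficit_le[OF assms(3,4,6,7)])
  fix w assume "inner_q n \<phi> w = 0"
  have "g * (vnorm n w)\<^sup>2 \<le> spectral_gap n A * (vnorm n w)\<^sup>2"
    using assms(8) by (intro mult_right_mono) auto
  also have "\<dots> \<le> Re (inner_q n w (mat_vec n A w))"
    by (rule spectral_gap_le_quadratic_form[OF assms(1-5) \<open>inner_q n \<phi> w = 0\<close>])
  finally show "g * (vnorm n w)\<^sup>2 \<le> Re (inner_q n w (mat_vec n A w))" .
qed

lemma nonneg_state_overlap:
  assumes "nonneg_state n \<phi>" and "nonneg_state n \<psi>"
  shows "inner_q n \<phi> \<psi> = of_real (Re (inner_q n \<phi> \<psi>))"
    and "0 \<le> Re (inner_q n \<phi> \<psi>)" and "Re (inner_q n \<phi> \<psi>) \<le> 1"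
proof -
  have summand: "cnj (\<phi> x) * \<psi> x = of_real (Re (\<phi> x) * Re (\<psi> x)) \<and> 0 \<le> Re (\<phi> x) * Re (\<psi> x)"
    if "x \<in> {..<2^n}" for x
  proof -
    have "\<phi> x \<in> \<real>" "\<psi> x \<in> \<real>" "0 \<le> Re (\<phi> x)" "0 \<le> Re (\<psi> x)"
      using assms that unfolding nonneg_state_def by auto
    then show ?thesis by (simp add: complex_is_Real_iff complex_eq_iff)
  qed
  then have "inner_q n \<phi> \<psi> = of_real (\<Sum>x<2^n. Re (\<phi> x) * Re (\<psi> x))"
    unfolding inner_q_def of_real_sum by (intro sum.cong) auto
  moreover have "0 \<le> (\<Sum>x<2^n. Re (\<phi> x) * Re (\<psi> x))"
    using summand by (intro sum_nonneg) auto
  ultimately show "inner_q n \<phi> \<psi> = of_real (Re (inner_q n \<phi> \<psi>))" and "0 \<le> Re (inner_q n \<phi> \<psi>)"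
    by simp_all
  have "Re (inner_q n \<phi> \<psi>) \<le> vnorm n \<phi> * vnorm n \<psi>"
    using complex_Re_le_cmod cmod_inner_q_le by (rule order_trans)
  then show "Re (inner_q n \<phi> \<psi>) \<le> 1" using assms unfolding nonneg_state_def by simp
qed

lemma nonneg_state_overlap_zero_qubits:
  assumes "nonneg_state 0 \<phi>" and "nonneg_state 0 \<psi>"
  shows "inner_q 0 \<phi> \<psi> = 1"
proof -
  have "v 0 = 1" if "nonneg_state 0 v" for v
  proof -
    have "v 0 = of_real (Re (v 0))" "0 \<le> Re (v 0)"
      using that unfolding nonneg_state_def by (auto simp: Reals_def)
    moreover have "cmod (v 0) = 1" using that unfolding nonneg_state_def vnorm_def by simp
    ultimately show ?thesis by (metis abs_of_nonneg norm_of_real of_real_1)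
  qed
  then have "\<phi> 0 = 1" "\<psi> 0 = 1" using assms by blast+
  then show ?thesis unfolding inner_q_def by simp
qed

lemma ge_one_minus_div_if_sq_deficit_le:
  fixes c d B :: real
  assumes "0 \<le> c" and "c \<le> 1" and "d \<noteq> 0" and "d\<^sup>2 * (1 - c\<^sup>2) \<le> B"
  shows "1 - B / d\<^sup>2 \<le> c"
proof -
  have "1 - c\<^sup>2 \<le> B / d\<^sup>2" using assms(3,4) by (simp add: field_simps)
  moreover have "c\<^sup>2 \<le> c" using assms(1,2) by (simp add: power2_eq_square mult_left_le)
  ultimately show ?thesis by linarith
qed

lemma vnorm_mat_vec_next_le:
  fixes H D :: "real \<Rightarrow> cmat"
  assumes der: "\<forall>s\<in>{0..1}. \<forall>x<2^n. \<forall>y<2^n. ((\<lambda>t. H t x y) has_vector_derivative D s x y) (at s within {0..1})"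
    and bound: "\<forall>s\<in>{0..1}. opnorm n (D s) \<le> J"
    and "j < T" and unit: "vnorm n \<psi> = 1"
    and ker: "\<forall>x<2^n. mat_vec n (H (real j / real T)) \<psi> x = 0"
  shows "vnorm n (mat_vec n (H (real (Suc j) / real T)) \<psi>) \<le> J / real T"
proof -
  have "real (Suc j) / real T - real j / real T = 1 / real T"
    by (simp add: diff_divide_distrib[symmetric])
  moreover have "vnorm n (mat_vec n (H (real (Suc j) / real T)) \<psi>) =
      vnorm n (\<lambda>x. mat_vec n (H (real (Suc j) / real T)) \<psi> x - mat_vec n (H (real j / real T)) \<psi> x)"
    using ker by (intro vnorm_cong) simp
  moreover have "\<dots> \<le> J * \<bar>real (Suc j) / real T - real j / real T\<bar>"
    using \<open>j < T\<close> by (intro vnorm_mat_vec_diff_le[OF _ der bound unit]) auto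
  ultimately show ?thesis by simp
qed

theorem lemma5p1:
  fixes n M k T :: nat
    and h :: "nat \<Rightarrow> real \<Rightarrow> cmat"   \<comment> \<open>h a s = H_a(s)\<close>
    and S :: "nat \<Rightarrow> nat set"        \<comment> \<open>qubits on which H_a acts\<close>
    and dH :: "real \<Rightarrow> cmat"          \<comment> \<open>dH(s)/ds\<close>
    and J \<Delta> :: real
    and \<psi> :: "nat \<Rightarrow> cvec"
  assumes local: "\<forall>a<M. S a \<subseteq> {..<n} \<and> card (S a) \<le> k \<and> (\<forall>s\<in>{0..1}. acts_on n (S a) (h a s))"
    and stoq: "\<forall>s\<in>{0..1}. stoquastic_ham n M (\<lambda>a. h a s)"
    and ff: "\<forall>s\<in>{0..1}. frustration_free n M (\<lambda>a. h a s)"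
    and deriv: "\<forall>s\<in>{0..1}. \<forall>x<2^n. \<forall>y<2^n.
                 ((\<lambda>t. ham_sum M (\<lambda>a. h a t) x y) has_vector_derivative dH s x y) (at s within {0..1})"
    and J_ub: "\<forall>s\<in>{0..1}. opnorm n (dH s) \<le> J"
    and J_att: "\<exists>s\<in>{0..1}. opnorm n (dH s) = J"
    and T_pos: "T > 0"
    and gs: "\<forall>j\<le>T. unique_ground_state n (ham_sum M (\<lambda>a. h a (real j / real T))) (\<psi> j)"
    and zero: "\<forall>j\<le>T. \<forall>x<2^n. mat_vec n (ham_sum M (\<lambda>a. h a (real j / real T))) (\<psi> j) x = 0"
    and nonneg: "\<forall>j\<le>T. nonneg_state n (\<psi> j)"
    and Delta: "\<Delta> = Min ((\<lambda>j. spectral_gap n (ham_sum M (\<lambda>a. h a (real j / real T)))) ` {..T})"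
  shows "\<forall>j<T. Re (inner_q n (\<psi> (Suc j)) (\<psi> j)) \<ge> 1 - J\<^sup>2 / ((real T)\<^sup>2 * \<Delta>\<^sup>2)"
proof (intro allI impI)
  fix j assume "j < T"
  define H where "H s = ham_sum M (\<lambda>a. h a s)" for s
  have psd: "psd n (H (real i / real T))" if "i \<le> T" for i
    using ff that T_pos frustration_free_psd unfolding H_def by (auto simp: field_simps)
  have ugs: "unique_ground_state n (H (real i / real T)) (\<psi> i)"
    and ker: "\<forall>x<2^n. mat_vec n (H (real i / real T)) (\<psi> i) x = 0"
    and unit: "vnorm n (\<psi> i) = 1" if "i \<le> T" for i
    using gs zero nonneg that unfolding H_def nonneg_state_def by auto
  define c where "c = Re (inner_q n (\<psi> (Suc j)) (\<psi> j))"
  have c: "inner_q n (\<psi> (Suc j)) (\<psi> j) = of_real c" "0 \<le> c" "c \<le> 1"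
    using nonneg_state_overlap nonneg \<open>j < T\<close> unfolding c_def by auto
  show "1 - J\<^sup>2 / ((real T)\<^sup>2 * \<Delta>\<^sup>2) \<le> c"
  proof (cases "n = 0")
    case True
    \<comment> \<open>a one-dimensional space has no second eigenvalue, so \<open>\<Delta>\<close> is a junk value here\<close>
    then show ?thesis
      using c(1) nonneg_state_overlap_zero_qubits nonneg \<open>j < T\<close> by auto
  next
    case False
    then have "n \<ge> 1" by simp
    let ?gap = "\<lambda>i. spectral_gap n (H (real i / real T))"
    have "\<Delta> \<in> ?gap ` {..T}" unfolding Delta H_def by (intro Min_in) auto
    then have "\<Delta> > 0" using spectral_gap_pos[OF psd ugs ker unit \<open>n \<ge> 1\<close>] by auto
    have "\<Delta> \<le> ?gap (Suc j)"
      unfolding Delta H_def by (rule Min_le[OF finite_imageI imageI]) (use \<open>j < T\<close> in auto)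
    then have "\<Delta>\<^sup>2 * (1 - c\<^sup>2) \<le> (vnorm n (mat_vec n (H (real (Suc j) / real T)) (\<psi> j)))\<^sup>2"
      using overlap_deficit_le_if_le_spectral_gap[OF psd ugs ker unit \<open>n \<ge> 1\<close> unit,
          of "Suc j" j \<Delta>] \<open>\<Delta> > 0\<close> \<open>j < T\<close> c
      by simp
    also have "\<dots> \<le> (J / real T)\<^sup>2"
      using vnorm_mat_vec_next_le[where H = H and D = dH, OF _ J_ub \<open>j < T\<close>]
        deriv unit ker vnorm_nonneg \<open>j < T\<close>
      unfolding H_def by (intro power_mono) auto
    finally have "1 - (J / real T)\<^sup>2 / \<Delta>\<^sup>2 \<le> c"
      using \<open>\<Delta> > 0\<close> by (intro ge_one_minus_div_if_sq_deficit_le[OF c(2,3)]) auto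
    then show ?thesis by (simp add: power_divide)
  qed
qed

end
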